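(* The string rewriting system $\mathcal{F}=D_F\cup A\cup B$ is terminating, where $D_F=\{1_3\rhd\to\rhd,\ 0_30_2\rhd\to 0_3\rhd,\ 1_30_2\rhd\to1_3\rhd,\ 1_31_2\rhd\to1_32_3\rhd,\ 2_31_2\rhd\to2_32_3\rhd\}$.
   Context: An SRS induces $u\ell v\to urv$ for each rule $\ell\to r$; terminating means no infinite rewrite sequence. Alphabet $\{0_2,1_2,0_3,1_3,2_3,\lhd,\rhd\}$; $A=\{0_20_3\to0_30_2,\ 0_21_3\to0_31_2,\ 0_22_3\to1_30_2,\ 1_20_3\to1_31_2,\ 1_21_3\to2_30_2,\ 1_22_3\to2_31_2\}$; $B=\{\lhd0_3\to\lhd1_2,\ \lhd1_3\to\lhd0_20_2,\ \lhd2_3\to\lhd0_21_2\}$. *)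

theory Defs
  imports Main
begin

text \<open>Alphabet: Z2/O2 are 0_2,1_2; Z3/O3/T3 are 0_3,1_3,2_3; LM is the left marker, RM the right marker.\<close>
datatype sym = Z2 | O2 | Z3 | O3 | T3 | LM | RM

type_synonym srs = "(sym list \<times> sym list) set"

definition rstep :: "srs \<Rightarrow> (sym list \<times> sym list) set" where
  "rstep R = {(u @ l @ v, u @ r @ v) | u l r v. (l, r) \<in> R}"

definition terminating :: "srs \<Rightarrow> bool" where
  "terminating R \<longleftrightarrow> \<not> (\<exists>f :: nat \<Rightarrow> sym list. \<forall>i. (f i, f (Suc i)) \<in> rstep R)"

definition A_rules :: srs where
  "A_rules = {([Z2, Z3], [Z3, Z2]), ([Z2, O3], [Z3, O2]), ([Z2, T3], [O3, Z2]),
              ([O2, Z3], [O3, O2]), ([O2, O3], [T3, Z2]), ([O2, T3], [T3, O2])}"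

definition B_rules :: srs where
  "B_rules = {([LM, Z3], [LM, O2]), ([LM, O3], [LM, Z2, Z2]), ([LM, T3], [LM, Z2, O2])}"

definition DF_rules :: srs where
  "DF_rules = {([O3, RM], [RM]), ([Z3, Z2, RM], [Z3, RM]), ([O3, Z2, RM], [O3, RM]),
               ([O3, O2, RM], [O3, T3, RM]), ([T3, O2, RM], [T3, T3, RM])}"

end

theory Submission
  imports Defs
begin

(* Read every maximal block of digits between markers as a number in mixed radix, starting from 1,
with 0_2, 1_2 as binary and 0_3, 1_3, 2_3 as ternary digits.
The rules of A and B do not change this value (the leading 1 makes \<lhd>0_3, \<lhd>1_3,
\<lhd>2_3 and their right-hand sides evaluate to 3, 4, 5), while a rule of D_F maps the value
n of a block ending in \<rhd> to collatz23 n. Every orbit of this Collatz-type map reaches 0: if n is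
odd and not 1 mod 3, write n + 1 = 2^a c with c odd; then n climbs in a steps to 3^a c - 1 and
falls in a + 1 further steps to (c - 1)/2 < n. So the sum of m^2 + 1 over the rest of the orbit is
a height that D_F lowers by more than the square of the new value. Weighting each block by this
height, by its binary-before-ternary inversions (which A removes) and by digit counts, according to
the markers around it, gives a natural number that drops at every rewrite step. *)

lemma terminating_if_measure_decreases:
  fixes \<mu> :: "sym list \<Rightarrow> nat"
  assumes "\<And>x y. (x, y) \<in> rstep R \<Longrightarrow> \<mu> y < \<mu> x"
  shows "terminating R"
proof -
  have "wf ((rstep R)\<inverse>)"
    by (rule wf_subset[OF wf_measure[of \<mu>]]) (auto simp: measure_def assms)
  then show ?thesis
    unfolding terminating_def wf_iff_no_infinite_down_chain by simp
qed

lemma funpow_reaches_zero: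
  fixes f :: "nat \<Rightarrow> nat"
  assumes "\<And>n. n > 0 \<Longrightarrow> \<exists>k. (f ^^ k) n < n"
  shows "\<exists>k. (f ^^ k) n = 0"
proof (induction n rule: less_induct)
  case (less n)
  show ?case
  proof (cases "n = 0")
    case True
    then show ?thesis by (intro exI[of _ 0]) simp
  next
    case False
    then obtain k where "(f ^^ k) n < n" using assms by blast
    then obtain j where "(f ^^ j) ((f ^^ k) n) = 0" using less.IH by blast
    then have "(f ^^ (j + k)) n = 0" by (simp add: funpow_add)
    then show ?thesis by blast
  qed
qed

definition orbit_length :: "(nat \<Rightarrow> nat) \<Rightarrow> nat \<Rightarrow> nat" where
  "orbit_length f n = (LEAST k. (f ^^ k) n = 0)"

definition orbit_weight :: "(nat \<Rightarrow> nat) \<Rightarrow> (nat \<Rightarrow> nat) \<Rightarrow> nat \<Rightarrow> nat" where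
  "orbit_weight f w n = (\<Sum>j<orbit_length f n. w ((f ^^ Suc j) n))"

lemma orbit_length_step:
  assumes "(f ^^ k) n = 0" and "n \<noteq> 0"
  shows "orbit_length f n = Suc (orbit_length f (f n))"
proof -
  have "orbit_length f n = Suc (LEAST m. (f ^^ Suc m) n = 0)"
    unfolding orbit_length_def using assms by (intro Least_Suc) simp_all
  also have "(\<lambda>m. (f ^^ Suc m) n = 0) = (\<lambda>m. (f ^^ m) (f n) = 0)"
    by (simp add: funpow_Suc_right del: funpow.simps)
  finally show ?thesis
    unfolding orbit_length_def .
qed

lemma orbit_weight_step:
  assumes "(f ^^ k) n = 0" and "n \<noteq> 0"
  shows "orbit_weight f w n = w (f n) + orbit_weight f w (f n)"
proof -
  have "orbit_weight f w n = (\<Sum>j<Suc (orbit_length f (f n)). w ((f ^^ Suc j) n))"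
    unfolding orbit_weight_def using orbit_length_step[OF assms] by simp
  also have "\<dots> = w (f n) + (\<Sum>j<orbit_length f (f n). w ((f ^^ Suc (Suc j)) n))"
    by (subst sum.lessThan_Suc_shift) simp
  also have "(\<Sum>j<orbit_length f (f n). w ((f ^^ Suc (Suc j)) n)) = orbit_weight f w (f n)"
    unfolding orbit_weight_def by (simp add: funpow_Suc_right del: funpow.simps)
  finally show ?thesis .
qed

lemma exists_pow2_times_odd:
  fixes m :: nat
  assumes "m > 0"
  shows "\<exists>a c. m = 2 ^ a * c \<and> odd c"
  using assms
proof (induction m rule: less_induct)
  case (less m)
  show ?case
  proof (cases "even m")
    case True
    then obtain m' where m': "m = 2 * m'" by blast
    with less.prems have "m' < m" "m' > 0" by auto
    then obtain a c where "m' = 2 ^ a * c" "odd c" using less.IH by blast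
    with m' show ?thesis by (intro exI[of _ "Suc a"] exI[of _ c]) simp
  next
    case False
    then show ?thesis by (intro exI[of _ 0] exI[of _ m]) simp
  qed
qed

definition collatz23 :: "nat \<Rightarrow> nat" where
  "collatz23 n = (if n mod 3 = 1 then n div 3 else if even n then n div 2 else (3 * n + 1) div 2)"

lemma collatz23_climb:
  assumes "c \<ge> 1" and "(2 ^ a * c - 1) mod 3 \<noteq> 1"
  shows "(collatz23 ^^ a) (2 ^ a * c - 1) = 3 ^ a * c - 1"
  using assms
proof (induction a arbitrary: c)
  case 0
  then show ?case by simp
next
  case (Suc a)
  have "2 ^ a * c \<ge> 1" using Suc.prems(1) by simp
  then obtain y where y: "2 ^ a * c = Suc y" by (cases "2 ^ a * c") auto
  then have start: "2 ^ Suc a * c - 1 = 2 * y + 1" and climbed: "2 ^ a * (3 * c) - 1 = 3 * y + 2"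
    by (simp_all add: mult.left_commute)
  have "collatz23 (2 * y + 1) = 3 * y + 2"
    using Suc.prems(2) unfolding start by (simp add: collatz23_def)
  moreover have "(collatz23 ^^ a) (3 * y + 2) = 3 ^ a * (3 * c) - 1"
    using Suc.IH[of "3 * c"] Suc.prems(1) unfolding climbed by presburger
  ultimately show ?case
    using start by (simp add: funpow_Suc_right mult.left_commute del: funpow.simps)
qed

lemma collatz23_fall:
  assumes "odd c"
  shows "(collatz23 ^^ j) ((3 ^ j * c - 1) div 2) = (c - 1) div 2"
proof (induction j)
  case 0
  then show ?case by simp
next
  case (Suc j)
  have "odd (3 ^ j * c)" using assms by simp
  then obtain t where "3 ^ j * c = 2 * t + 1" by (rule oddE)
  then have "collatz23 ((3 ^ Suc j * c - 1) div 2) = (3 ^ j * c - 1) div 2"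
    by (simp add: collatz23_def mult.assoc)
  with Suc.IH show ?case
    by (simp add: funpow_Suc_right del: funpow.simps)
qed

lemma collatz23_descends:
  assumes "n > 0"
  shows "\<exists>k. (collatz23 ^^ k) n < n"
proof (cases "n mod 3 = 1 \<or> even n")
  case True
  then have "collatz23 n < n" using assms by (auto simp: collatz23_def)
  then show ?thesis by (intro exI[of _ 1]) simp
next
  case False
  then have "odd n" and n_mod: "n mod 3 \<noteq> 1" by auto
  obtain a c where ac: "n + 1 = 2 ^ a * c" "odd c"
    using exists_pow2_times_odd[of "n + 1"] by auto
  with \<open>odd n\<close> obtain b where a: "a = Suc b" by (cases a) auto
  have "c \<ge> 1" using ac(2) by (cases c) auto
  have n: "n = 2 ^ a * c - 1" using ac(1) by simp
  have "(collatz23 ^^ a) n = 3 ^ a * c - 1"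
    using collatz23_climb[OF \<open>c \<ge> 1\<close>] n_mod n by simp
  moreover have "collatz23 (3 ^ a * c - 1) = (3 ^ a * c - 1) div 2"
  proof -
    have "3 ^ b * c \<ge> 1" using \<open>c \<ge> 1\<close> by simp
    then obtain z where "3 ^ a * c - 1 = 3 * z + 2" using a by (cases "3 ^ b * c") (auto simp: mult.assoc)
    moreover have "even (3 ^ a * c - 1)" using \<open>odd c\<close> \<open>c \<ge> 1\<close> by simp
    moreover have "(3 * z + 2) mod 3 = 2" by presburger
    ultimately show ?thesis by (simp add: collatz23_def)
  qed
  moreover have "(collatz23 ^^ a) ((3 ^ a * c - 1) div 2) = (c - 1) div 2"
    using collatz23_fall[OF ac(2)] .
  ultimately have "(collatz23 ^^ (a + Suc a)) n = (c - 1) div 2"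
    by (simp only: funpow_add funpow.simps o_apply)
  moreover have "(c - 1) div 2 < n"
  proof -
    have "c \<le> 2 ^ b * c" by simp
    moreover have "Suc n = 2 * (2 ^ b * c)" using ac(1) a by simp
    ultimately have "c \<le> n" using \<open>c \<ge> 1\<close> by linarith
    then show ?thesis using div_le_dividend[of "c - 1" 2] \<open>c \<ge> 1\<close> by linarith
  qed
  ultimately show ?thesis by metis
qed

corollary collatz23_reaches_zero: "\<exists>k. (collatz23 ^^ k) n = 0"
  by (rule funpow_reaches_zero) (rule collatz23_descends)

definition collatz23_height :: "nat \<Rightarrow> nat" where
  "collatz23_height = orbit_weight collatz23 (\<lambda>m. m\<^sup>2 + 1)"

lemma collatz23_height_step:
  assumes "n \<noteq> 0"
  shows "collatz23_height n = (collatz23 n)\<^sup>2 + 1 + collatz23_height (collatz23 n)"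
proof -
  obtain k where "(collatz23 ^^ k) n = 0" using collatz23_reaches_zero by blast
  from orbit_weight_step[OF this assms] show ?thesis
    unfolding collatz23_height_def by simp
qed

fun is_bin :: "sym \<Rightarrow> bool" where
  "is_bin Z2 = True" | "is_bin O2 = True" | "is_bin _ = False"

fun is_ter :: "sym \<Rightarrow> bool" where
  "is_ter Z3 = True" | "is_ter O3 = True" | "is_ter T3 = True" | "is_ter _ = False"

definition bin_count :: "sym list \<Rightarrow> nat" where
  "bin_count s = length (filter is_bin s)"

definition ter_count :: "sym list \<Rightarrow> nat" where
  "ter_count s = length (filter is_ter s)"

lemma bin_count_simps [simp]:
  "bin_count [] = 0" "bin_count (x # xs) = (if is_bin x then Suc (bin_count xs) else bin_count xs)"
  "bin_count (xs @ ys) = bin_count xs + bin_count ys"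
  by (simp_all add: bin_count_def)

lemma ter_count_simps [simp]:
  "ter_count [] = 0" "ter_count (x # xs) = (if is_ter x then Suc (ter_count xs) else ter_count xs)"
  "ter_count (xs @ ys) = ter_count xs + ter_count ys"
  by (simp_all add: ter_count_def)

fun inversions :: "sym list \<Rightarrow> nat" where
  "inversions [] = 0"
| "inversions (x # xs) = (if is_bin x then ter_count xs else 0) + inversions xs"

lemma inversions_append [simp]:
  "inversions (xs @ ys) = inversions xs + inversions ys + bin_count xs * ter_count ys"
  by (induction xs) auto

lemma inversions_le: "inversions s \<le> bin_count s * ter_count s"
proof (induction s)
  case (Cons x s)
  then show ?case by (cases x) auto
qed simp

fun push_digit :: "nat \<Rightarrow> sym \<Rightarrow> nat" where
  "push_digit v Z2 = 2 * v" | "push_digit v O2 = 2 * v + 1"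
| "push_digit v Z3 = 3 * v" | "push_digit v O3 = 3 * v + 1" | "push_digit v T3 = 3 * v + 2"
| "push_digit v LM = v" | "push_digit v RM = v"

definition word_value :: "nat \<Rightarrow> sym list \<Rightarrow> nat" where
  "word_value v s = foldl push_digit v s"

lemma word_value_simps [simp]:
  "word_value v [] = v" "word_value v (x # xs) = word_value (push_digit v x) xs"
  "word_value v (xs @ ys) = word_value (word_value v xs) ys"
  by (simp_all add: word_value_def)

lemma word_value_ge: "v \<ge> 1 \<Longrightarrow> word_value v s \<ge> v + bin_count s + ter_count s"
proof (induction s arbitrary: v)
  case (Cons x s)
  have "push_digit v x \<ge> 1" using Cons.prems by (cases x) auto
  then have "word_value (push_digit v x) s \<ge> push_digit v x + bin_count s + ter_count s"
    using Cons.IH by blast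
  then show ?case using Cons.prems by (cases x) auto
qed simp

lemma inversions_ter_count_le_word_value: "inversions s + (ter_count s)\<^sup>2 \<le> (word_value 1 s)\<^sup>2"
proof -
  have "inversions s + (ter_count s)\<^sup>2 \<le> bin_count s * ter_count s + ter_count s * ter_count s"
    using inversions_le[of s] by (simp add: power2_eq_square)
  also have "\<dots> \<le> (bin_count s + ter_count s) * (bin_count s + ter_count s)"
    by (simp add: algebra_simps)
  also have "\<dots> \<le> word_value 1 s * word_value 1 s"
    using word_value_ge[of 1 s] by (intro mult_mono) auto
  finally show ?thesis by (simp add: power2_eq_square)
qed

(* The flags record whether the block is preceded by \<lhd> and followed by \<rhd>. With both, the height
dominates the other terms by inversions_ter_count_le_word_value. With \<lhd> only, the drop of
ter_count^2 under B outweighs the new inversions; with \<rhd> only, 2 bin_count^2 pays for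
1_3 1_2 \<rhd> \<rightarrow> 1_3 2_3 \<rhd>, which turns a binary digit into a ternary one. *)
definition block_potential :: "bool \<Rightarrow> sym list \<Rightarrow> bool \<Rightarrow> nat" where
  "block_potential lm s rm = inversions s + (if lm then (ter_count s)\<^sup>2 else 0) +
     (if rm then if lm then collatz23_height (word_value 1 s) else 2 * (bin_count s)\<^sup>2 + ter_count s
      else 0)"

lemma block_potential_A:
  assumes "(l, r) \<in> A_rules"
  shows "block_potential lm (a @ r @ b) rm < block_potential lm (a @ l @ b) rm"
proof -
  have "bin_count r = bin_count l" "ter_count r = ter_count l" "inversions r < inversions l"
    "word_value v r = word_value v l" for v
    using assms unfolding A_rules_def by auto
  then show ?thesis
    unfolding block_potential_def by simp
qed

lemma B_rules_cases:
  assumes "(LM # l, LM # r) \<in> B_rules"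
  obtains "l = [Z3]" "r = [O2]" | "l = [O3]" "r = [Z2, Z2]" | "l = [T3]" "r = [Z2, O2]"
  using assms unfolding B_rules_def by auto

lemma block_potential_B:
  assumes "(LM # l, LM # r) \<in> B_rules"
  shows "block_potential True (r @ b) rm < block_potential True (l @ b) rm"
  using assms
  by (cases rule: B_rules_cases) (simp_all add: block_potential_def power2_eq_square)

lemma DF_rules_cases:
  assumes "(l @ [RM], r @ [RM]) \<in> DF_rules"
  obtains "l = [O3]" "r = []" | "l = [Z3, Z2]" "r = [Z3]" | "l = [O3, Z2]" "r = [O3]"
    | "l = [O3, O2]" "r = [O3, T3]" | "l = [T3, O2]" "r = [T3, T3]"
  using assms unfolding DF_rules_def by auto

lemma collatz23_push_digits:
  "collatz23 (3 * v + 1) = v"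
  "collatz23 (2 * (3 * v)) = 3 * v"
  "collatz23 (2 * (3 * v + 1)) = 3 * v + 1"
  "collatz23 (2 * (3 * v + 1) + 1) = 3 * (3 * v + 1) + 2"
  "collatz23 (2 * (3 * v + 2) + 1) = 3 * (3 * v + 2) + 2"
  by (simp_all add: collatz23_def mod_Suc)

lemma word_value_DF:
  assumes "(l @ [RM], r @ [RM]) \<in> DF_rules"
  shows "word_value v r = collatz23 (word_value v l)"
  using assms by (cases rule: DF_rules_cases)
    (simp_all only: word_value_simps push_digit.simps collatz23_push_digits)

lemma block_potential_DF:
  assumes DF: "(l @ [RM], r @ [RM]) \<in> DF_rules"
  shows "block_potential lm (a @ r) True < block_potential lm (a @ l) True"
proof (cases lm)
  case True
  have "word_value 1 (a @ l) \<noteq> 0"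
    using word_value_ge[of 1 "a @ l"] by simp
  then have "(word_value 1 (a @ r))\<^sup>2 + collatz23_height (word_value 1 (a @ r))
      < collatz23_height (word_value 1 (a @ l))"
    using collatz23_height_step word_value_DF[OF DF] by simp
  then show ?thesis
    using True inversions_ter_count_le_word_value[of "a @ r"]
    unfolding block_potential_def by simp
next
  case False
  with DF show ?thesis
    by (cases rule: DF_rules_cases) (simp_all add: block_potential_def power2_eq_square)
qed

definition marker_free :: "sym list \<Rightarrow> bool" where
  "marker_free s \<longleftrightarrow> LM \<notin> set s \<and> RM \<notin> set s"

(* potential lm acc w sums block_potential over the maximal marker-free blocks of acc @ w, where acc
is the already-read part of the current block and lm tells whether that block starts after \<lhd>. *)
fun potential :: "bool \<Rightarrow> sym list \<Rightarrow> sym list \<Rightarrow> nat" where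
  "potential lm acc [] = block_potential lm acc False"
| "potential lm acc (x # xs) =
    (if x = LM \<or> x = RM then block_potential lm acc (x = RM) + potential (x = LM) [] xs
     else potential lm (acc @ [x]) xs)"

lemma potential_append_marker_free:
  "marker_free s \<Longrightarrow> potential lm acc (s @ z) = potential lm (acc @ s) z"
  by (induction s arbitrary: acc) (auto simp: marker_free_def)

lemma potential_prefix: "\<exists>C lm' acc'. \<forall>z. potential lm acc (u @ z) = C + potential lm' acc' z"
proof (induction u arbitrary: lm acc)
  case Nil
  show ?case by (intro exI[of _ 0] exI[of _ lm] exI[of _ acc]) simp
next
  case (Cons x u)
  show ?case
  proof (cases "x = LM \<or> x = RM")
    case True
    obtain C lm' acc' where "\<forall>z. potential (x = LM) [] (u @ z) = C + potential lm' acc' z"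
      using Cons.IH by blast
    with True show ?thesis
      by (intro exI[of _ "block_potential lm acc (x = RM) + C"] exI[of _ lm'] exI[of _ acc']) auto
  next
    case False
    obtain C lm' acc' where "\<forall>z. potential lm (acc @ [x]) (u @ z) = C + potential lm' acc' z"
      using Cons.IH by blast
    with False show ?thesis by auto
  qed
qed

lemma potential_suffix: "\<exists>v' rm C. \<forall>lm acc. potential lm acc v = block_potential lm (acc @ v') rm + C"
proof (induction v)
  case Nil
  show ?case by (intro exI[of _ "[]"] exI[of _ False] exI[of _ 0]) simp
next
  case (Cons x v)
  show ?case
  proof (cases "x = LM \<or> x = RM")
    case True
    then show ?thesis
      by (intro exI[of _ "[]"] exI[of _ "x = RM"] exI[of _ "potential (x = LM) [] v"]) auto
  next
    case False
    obtain v' rm C where "\<forall>lm acc. potential lm acc v = block_potential lm (acc @ v') rm + C"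
      using Cons.IH by blast
    with False show ?thesis
      by (intro exI[of _ "x # v'"] exI[of _ rm] exI[of _ C]) auto
  qed
qed

lemma potential_A:
  assumes "(l, r) \<in> A_rules"
  shows "potential lm acc (r @ v) < potential lm acc (l @ v)"
proof -
  obtain v' rm C where "\<forall>lm acc. potential lm acc v = block_potential lm (acc @ v') rm + C"
    using potential_suffix by blast
  moreover have "marker_free l" "marker_free r"
    using assms unfolding A_rules_def marker_free_def by auto
  ultimately show ?thesis
    using block_potential_A[OF assms] by (simp add: potential_append_marker_free)
qed

lemma potential_B:
  assumes "(l, r) \<in> B_rules"
  shows "potential lm acc (r @ v) < potential lm acc (l @ v)"
proof -
  obtain l' r' where lr: "l = LM # l'" "r = LM # r'" and "marker_free l'" "marker_free r'"
    using assms unfolding B_rules_def marker_free_def by auto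
  obtain v' rm C where "\<forall>lm acc. potential lm acc v = block_potential lm (acc @ v') rm + C"
    using potential_suffix by blast
  with \<open>marker_free l'\<close> \<open>marker_free r'\<close> show ?thesis
    using block_potential_B assms unfolding lr by (simp add: potential_append_marker_free)
qed

lemma potential_DF:
  assumes "(l, r) \<in> DF_rules"
  shows "potential lm acc (r @ v) < potential lm acc (l @ v)"
proof -
  define l' r' where "l' = butlast l" and "r' = butlast r"
  have lr: "l = l' @ [RM]" "r = r' @ [RM]" and "marker_free l'" "marker_free r'"
    using assms unfolding DF_rules_def marker_free_def l'_def r'_def by auto
  with assms show ?thesis
    using block_potential_DF[of l' r' lm acc] by (simp add: potential_append_marker_free)
qed

lemma potential_rstep_decreasing:
  assumes "(x, y) \<in> rstep (DF_rules \<union> A_rules \<union> B_rules)"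
  shows "potential False [] y < potential False [] x"
proof -
  obtain u l r v where xy: "x = u @ l @ v" "y = u @ r @ v"
    and rule: "(l, r) \<in> DF_rules \<union> A_rules \<union> B_rules"
    using assms unfolding rstep_def by blast
  obtain C lm acc where "\<forall>z. potential False [] (u @ z) = C + potential lm acc z"
    using potential_prefix by blast
  moreover have "potential lm acc (r @ v) < potential lm acc (l @ v)"
    using rule potential_A potential_B potential_DF by blast
  ultimately show ?thesis
    unfolding xy by simp
qed

theorem mainTheorem11:
  shows "terminating (DF_rules \<union> A_rules \<union> B_rules)"
  using potential_rstep_decreasing by (rule terminating_if_measure_decreases)

end
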